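(* Let $P,PA$ be labelings, $c$ a command and $\rho_1,\rho_2,\mu_1,\mu_2$ states. Assume $\mathtt b\notin\mathrm{UsedVars}(c)$, $\rho_1(\mathtt b)=\rho_2(\mathtt b)=0$, $|a|_{\mu_1}>0$ and $|a|_{\mu_2}>0$ for every array $a$, $P;PA\vdash_{ct}c$, $\rho_1\sim_P\rho_2$ and $\mu_1\sim_{PA}\mu_2$. Then $\langle\mathrm{SvSLH}_P(c),\rho_1,\mu_1,\mathtt{false}\rangle\approx_s\langle\mathrm{SvSLH}_P(c),\rho_2,\mu_2,\mathtt{false}\rangle$.
   Context: Language AWhile: scalar variables $X\in\mathcal V$, arrays $a\in\mathcal A$; $e::=n\mid X\mid\mathrm{op}_{\mathbb N}(e,\dots,e)\mid be\,?\,e_1:e_2$; $be::=\mathtt{true}\mid\mathtt{false}\mid\mathrm{cmp}(e,e)\mid\mathrm{op}_{\mathbb B}(be,\dots,be)$; $c::=\mathtt{skip}\mid X:=e\mid c_1;c_2\mid\mathtt{if}\ be\ \mathtt{then}\ c_1\ \mathtt{else}\ c_2\mid\mathtt{while}\ be\ \mathtt{do}\ c\mid X\leftarrow a[e]\mid a[e]\leftarrow e'$. Scalar state $\rho:\mathcal V\to\mathbb N$; array state $\mu$ with sizes $|a|_\mu$ and values $\mu(a)[i]$; $[\![\cdot]\!]_\rho$ pure evaluation. $\mathrm{UsedVars}(c)$: scalar variables occurring in $c$; $\mathtt b$ a reserved scalar variable. Speculative semantics: configurations $\langle c,\rho,\mu,\beta\rangle$; steps labelled by optional observation ($\mathrm{branch}(v),\mathrm{read}(a,i),\mathrm{write}(a,i)$)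 and optional directive ($\mathit{step},\mathit{force},\mathrm{load}(a',j),\mathrm{store}(a',j)$). $X:=e\to\mathtt{skip}$ updating $X$; $c_1;c_2\to c_1';c_2$ if $c_1\to c_1'$; $\mathtt{skip};c\to c$; $\mathtt{while}\ be\ \mathtt{do}\ c\to\mathtt{if}\ be\ \mathtt{then}\ (c;\mathtt{while}\ be\ \mathtt{do}\ c)\ \mathtt{else}\ \mathtt{skip}$ (no obs, no directive, flag kept). Conditional: $\mathit{step}$ goes to branch $v=[\![be]\!]_\rho$; $\mathit{force}$ goes to branch $\neg v$ and sets $\beta:=\mathtt{true}$; obs $\mathrm{branch}(v)$. $X\leftarrow a[ie]$: with $\mathit{step}$ needs $i=[\![ie]\!]_\rho<|a|_\mu$, $X:=\mu(a)[i]$; with $\mathrm{load}(a',j)$ needs $\beta=\mathtt{true}$, $i\ge|a|_\mu$, $j<|a'|_\mu$, $X:=\mu(a')[j]$; obs $\mathrm{read}(a,i)$. $a[ie]\leftarrow e$: with $\mathit{step}$ needs $i<|a|_\mu$, $\mu[a[i]\mapsto[\![e]\!]_\rho]$; with $\mathrm{store}(a',j)$ needs $\beta=\mathtt{true}$, $i\ge|a|_\mu$, $j<|a'|_\mu$, $\mu[a'[j]\mapsto[\![e]\!]_\rho]$; obs $\mathrm{write}(a,i)$. $\langle c_1,\rho_1,\mu_1,\beta_1\rangle\approx_s\langle c_2,\rho_2,\mu_2,\beta_2\rangle$ iff for all $D,O_1,O_2$, whenever both multi-step with the same directive list $D$ producing $O_1,O_2$, $O_1=O_2$. Labels: $\mathtt{true}$=public,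 $\mathtt{false}$=secret; $\ell_1\sqsubseteq\ell_2$ iff $\ell_2=\mathtt{true}\Rightarrow\ell_1=\mathtt{true}$. $P(e),P(be)$ public iff all variables occurring are public. $\rho_1\sim_P\rho_2$: agreement on public scalar variables; $\mu_1\sim_{PA}\mu_2$: agreement on sizes and contents of public arrays. CCT typing $P;PA\vdash_{ct}c$: $\mathtt{skip}$; $X:=e$ if $P(e)\sqsubseteq P(X)$; $c_1;c_2$ if both typed; $\mathtt{if}$ if $P(be)=\mathtt{true}$ and both branches typed; $\mathtt{while}$ if $P(be)=\mathtt{true}$ and body typed; $X\leftarrow a[i]$ if $P(i)=\mathtt{true}$ and $PA(a)\sqsubseteq P(X)$; $a[i]\leftarrow e$ if $P(i)=\mathtt{true}$ and $P(e)\sqsubseteq PA(a)$. Transformation $\mathrm{SvSLH}_P$: $\mathtt{skip}$, $X:=e$, $a[i]\leftarrow e$ unchanged; sequences translated componentwise; $\mathtt{if}\ be\ \mathtt{then}\ c_1\ \mathtt{else}\ c_2\mapsto\mathtt{if}\ be\ \mathtt{then}\ (\mathtt b:=be\,?\,\mathtt b:1;[\![c_1]\!])\ \mathtt{else}\ (\mathtt b:=be\,?\,1:\mathtt b;[\![c_2]\!])$; $\mathtt{while}\ be\ \mathtt{do}\ c\mapsto(\mathtt{while}\ be\ \mathtt{do}\ (\mathtt b:=be\,?\,\mathtt b:1;[\![c]\!]));\ \mathtt b:=be\,?\,1:\mathtt b$; $X\leftarrow a[i]\mapsto(X\leftarrow a[i];\ X:=(\mathtt b==1)\,?\,0:X)$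 if $P(X)=\mathtt{true}$, and unchanged otherwise. *)

theory Defs
  imports Main
begin

type_synonym vname = string
type_synonym aname = string
type_synonym val = nat

datatype aexp =
    ANum nat
  | AVar vname
  | AOp "nat list \<Rightarrow> nat" "aexp list"
  | ACond bexp aexp aexp
and bexp =
    BTrue
  | BFalse
  | BCmp "nat \<Rightarrow> nat \<Rightarrow> bool" aexp aexp
  | BOp "bool list \<Rightarrow> bool" "bexp list"

datatype com =
    Skip
  | Asgn vname aexp
  | Seq com com
  | If bexp com com
  | While bexp com
  | ARead vname aname aexp
  | AWrite aname aexp aexp

type_synonym sstate = "vname \<Rightarrow> val"
type_synonym astate = "aname \<Rightarrow> val list"

fun aeval :: "sstate \<Rightarrow> aexp \<Rightarrow> nat" and beval :: "sstate \<Rightarrow> bexp \<Rightarrow> bool" where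
  "aeval \<rho> (ANum n) = n"
| "aeval \<rho> (AVar x) = \<rho> x"
| "aeval \<rho> (AOp f es) = f (map (aeval \<rho>) es)"
| "aeval \<rho> (ACond be e1 e2) = (if beval \<rho> be then aeval \<rho> e1 else aeval \<rho> e2)"
| "beval \<rho> BTrue = True"
| "beval \<rho> BFalse = False"
| "beval \<rho> (BCmp f e1 e2) = f (aeval \<rho> e1) (aeval \<rho> e2)"
| "beval \<rho> (BOp f bs) = f (map (beval \<rho>) bs)"

fun avars :: "aexp \<Rightarrow> vname set" and bvars :: "bexp \<Rightarrow> vname set" where
  "avars (ANum n) = {}"
| "avars (AVar x) = {x}"
| "avars (AOp f es) = (\<Union>e\<in>set es. avars e)"
| "avars (ACond be e1 e2) = bvars be \<union> avars e1 \<union> avars e2"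
| "bvars BTrue = {}"
| "bvars BFalse = {}"
| "bvars (BCmp f e1 e2) = avars e1 \<union> avars e2"
| "bvars (BOp f bs) = (\<Union>b\<in>set bs. bvars b)"

fun used_vars :: "com \<Rightarrow> vname set" where
  "used_vars Skip = {}"
| "used_vars (Asgn x e) = {x} \<union> avars e"
| "used_vars (Seq c1 c2) = used_vars c1 \<union> used_vars c2"
| "used_vars (If be c1 c2) = bvars be \<union> used_vars c1 \<union> used_vars c2"
| "used_vars (While be c) = bvars be \<union> used_vars c"
| "used_vars (ARead x a i) = {x} \<union> avars i"
| "used_vars (AWrite a i e) = avars i \<union> avars e"

text \<open>The reserved misspeculation-flag variable \<open>b\<close>.\<close>
definition bflag :: vname where "bflag = ''b''"

datatype observation = OBranch bool | ORead aname nat | OWrite aname nat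
datatype direction = DStep | DForce | DLoad aname nat | DStore aname nat

text \<open>Single step; the direction and observation lists have length at most one
(empty list = no directive / no observation).\<close>
inductive spec_step ::
  "com \<Rightarrow> sstate \<Rightarrow> astate \<Rightarrow> bool \<Rightarrow> direction list \<Rightarrow> observation list \<Rightarrow>
   com \<Rightarrow> sstate \<Rightarrow> astate \<Rightarrow> bool \<Rightarrow> bool" where
  Spec_Asgn: "spec_step (Asgn x e) \<rho> \<mu> \<beta> [] [] Skip (\<rho>(x := aeval \<rho> e)) \<mu> \<beta>"
| Spec_Seq: "spec_step c1 \<rho> \<mu> \<beta> ds os c1' \<rho>' \<mu>' \<beta>' \<Longrightarrow>
             spec_step (Seq c1 c2) \<rho> \<mu> \<beta> ds os (Seq c1' c2) \<rho>' \<mu>' \<beta>'"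
| Spec_Seq_Skip: "spec_step (Seq Skip c) \<rho> \<mu> \<beta> [] [] c \<rho> \<mu> \<beta>"
| Spec_If: "v = beval \<rho> be \<Longrightarrow>
            spec_step (If be c1 c2) \<rho> \<mu> \<beta> [DStep] [OBranch v] (if v then c1 else c2) \<rho> \<mu> \<beta>"
| Spec_If_Force: "v = beval \<rho> be \<Longrightarrow>
            spec_step (If be c1 c2) \<rho> \<mu> \<beta> [DForce] [OBranch v] (if v then c2 else c1) \<rho> \<mu> True"
| Spec_While: "spec_step (While be c) \<rho> \<mu> \<beta> [] []
                 (If be (Seq c (While be c)) Skip) \<rho> \<mu> \<beta>"
| Spec_ARead: "i = aeval \<rho> ie \<Longrightarrow> i < length (\<mu> a) \<Longrightarrow>
            spec_step (ARead x a ie) \<rho> \<mu> \<beta> [DStep] [ORead a i] Skip (\<rho>(x := \<mu> a ! i)) \<mu> \<beta>"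
| Spec_ARead_Load: "i = aeval \<rho> ie \<Longrightarrow> \<beta> = True \<Longrightarrow> length (\<mu> a) \<le> i \<Longrightarrow> j < length (\<mu> a') \<Longrightarrow>
            spec_step (ARead x a ie) \<rho> \<mu> \<beta> [DLoad a' j] [ORead a i] Skip (\<rho>(x := \<mu> a' ! j)) \<mu> \<beta>"
| Spec_AWrite: "i = aeval \<rho> ie \<Longrightarrow> i < length (\<mu> a) \<Longrightarrow>
            spec_step (AWrite a ie e) \<rho> \<mu> \<beta> [DStep] [OWrite a i] Skip \<rho> (\<mu>(a := (\<mu> a)[i := aeval \<rho> e])) \<beta>"
| Spec_AWrite_Store: "i = aeval \<rho> ie \<Longrightarrow> \<beta> = True \<Longrightarrow> length (\<mu> a) \<le> i \<Longrightarrow> j < length (\<mu> a') \<Longrightarrow>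
            spec_step (AWrite a ie e) \<rho> \<mu> \<beta> [DStore a' j] [OWrite a i] Skip \<rho> (\<mu>(a' := (\<mu> a')[j := aeval \<rho> e])) \<beta>"

inductive spec_multi ::
  "com \<Rightarrow> sstate \<Rightarrow> astate \<Rightarrow> bool \<Rightarrow> direction list \<Rightarrow> observation list \<Rightarrow>
   com \<Rightarrow> sstate \<Rightarrow> astate \<Rightarrow> bool \<Rightarrow> bool" where
  Multi_Refl: "spec_multi c \<rho> \<mu> \<beta> [] [] c \<rho> \<mu> \<beta>"
| Multi_Step: "spec_step c \<rho> \<mu> \<beta> ds1 os1 c' \<rho>' \<mu>' \<beta>' \<Longrightarrow>
               spec_multi c' \<rho>' \<mu>' \<beta>' ds2 os2 c'' \<rho>'' \<mu>'' \<beta>'' \<Longrightarrow>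
               spec_multi c \<rho> \<mu> \<beta> (ds1 @ ds2) (os1 @ os2) c'' \<rho>'' \<mu>'' \<beta>''"

definition spec_equiv ::
  "com \<Rightarrow> sstate \<Rightarrow> astate \<Rightarrow> bool \<Rightarrow> com \<Rightarrow> sstate \<Rightarrow> astate \<Rightarrow> bool \<Rightarrow> bool" where
  "spec_equiv c1 \<rho>1 \<mu>1 \<beta>1 c2 \<rho>2 \<mu>2 \<beta>2 \<longleftrightarrow>
     (\<forall>ds os1 os2 c1' \<rho>1' \<mu>1' \<beta>1' c2' \<rho>2' \<mu>2' \<beta>2'.
        spec_multi c1 \<rho>1 \<mu>1 \<beta>1 ds os1 c1' \<rho>1' \<mu>1' \<beta>1' \<longrightarrow>
        spec_multi c2 \<rho>2 \<mu>2 \<beta>2 ds os2 c2' \<rho>2' \<mu>2' \<beta>2' \<longrightarrow> os1 = os2)"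

text \<open>Labels: True = public, False = secret.\<close>
type_synonym pub_vars = "vname \<Rightarrow> bool"
type_synonym pub_arrs = "aname \<Rightarrow> bool"

definition lab_le :: "bool \<Rightarrow> bool \<Rightarrow> bool" (infix "\<sqsubseteq>" 50) where
  "l1 \<sqsubseteq> l2 \<longleftrightarrow> (l2 = True \<longrightarrow> l1 = True)"

definition label_of_aexp :: "pub_vars \<Rightarrow> aexp \<Rightarrow> bool" where
  "label_of_aexp P e \<longleftrightarrow> (\<forall>x\<in>avars e. P x)"

definition label_of_bexp :: "pub_vars \<Rightarrow> bexp \<Rightarrow> bool" where
  "label_of_bexp P be \<longleftrightarrow> (\<forall>x\<in>bvars be. P x)"

definition pub_equiv :: "pub_vars \<Rightarrow> sstate \<Rightarrow> sstate \<Rightarrow> bool" where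
  "pub_equiv P \<rho>1 \<rho>2 \<longleftrightarrow> (\<forall>x. P x \<longrightarrow> \<rho>1 x = \<rho>2 x)"

definition pub_equiv_arr :: "pub_arrs \<Rightarrow> astate \<Rightarrow> astate \<Rightarrow> bool" where
  "pub_equiv_arr PA \<mu>1 \<mu>2 \<longleftrightarrow>
     (\<forall>a. PA a \<longrightarrow> length (\<mu>1 a) = length (\<mu>2 a) \<and> (\<forall>i < length (\<mu>1 a). \<mu>1 a ! i = \<mu>2 a ! i))"

inductive cct_typed :: "pub_vars \<Rightarrow> pub_arrs \<Rightarrow> com \<Rightarrow> bool" where
  CT_Skip: "cct_typed P PA Skip"
| CT_Asgn: "label_of_aexp P e \<sqsubseteq> P x \<Longrightarrow> cct_typed P PA (Asgn x e)"
| CT_Seq: "cct_typed P PA c1 \<Longrightarrow> cct_typed P PA c2 \<Longrightarrow> cct_typed P PA (Seq c1 c2)"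
| CT_If: "label_of_bexp P be = True \<Longrightarrow> cct_typed P PA c1 \<Longrightarrow> cct_typed P PA c2 \<Longrightarrow>
          cct_typed P PA (If be c1 c2)"
| CT_While: "label_of_bexp P be = True \<Longrightarrow> cct_typed P PA c \<Longrightarrow> cct_typed P PA (While be c)"
| CT_ARead: "label_of_aexp P i = True \<Longrightarrow> PA a \<sqsubseteq> P x \<Longrightarrow> cct_typed P PA (ARead x a i)"
| CT_AWrite: "label_of_aexp P i = True \<Longrightarrow> label_of_aexp P e \<sqsubseteq> PA a \<Longrightarrow>
              cct_typed P PA (AWrite a i e)"

fun svslh :: "pub_vars \<Rightarrow> com \<Rightarrow> com" where
  "svslh P Skip = Skip"
| "svslh P (Asgn x e) = Asgn x e"
| "svslh P (Seq c1 c2) = Seq (svslh P c1) (svslh P c2)"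
| "svslh P (If be c1 c2) =
     If be (Seq (Asgn bflag (ACond be (AVar bflag) (ANum 1))) (svslh P c1))
           (Seq (Asgn bflag (ACond be (ANum 1) (AVar bflag))) (svslh P c2))"
| "svslh P (While be c) =
     Seq (While be (Seq (Asgn bflag (ACond be (AVar bflag) (ANum 1))) (svslh P c)))
         (Asgn bflag (ACond be (ANum 1) (AVar bflag)))"
| "svslh P (ARead x a i) =
     (if P x then Seq (ARead x a i)
                      (Asgn x (ACond (BCmp (=) (AVar bflag) (ANum 1)) (ANum 0) (AVar x)))
      else ARead x a i)"
| "svslh P (AWrite a i e) = AWrite a i e"

end

(*
  The flag b is 1 on every mispredicted path: the wrong branch of a hardened conditional (or the
  mispredicted exit of a hardened loop) begins with an update that sets b to 1, and once set, b
  stays 1 because the updates only ever keep it or set it to 1. Hence a value loaded into a public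
  variable can depend on secrets only when b = 1, and it is then immediately overwritten by 0; stores
  of secrets into public arrays can only happen while misspeculating, when b is (about to be) 1.
  So two runs from low-equivalent states, driven by the same directives, stay related by an
  invariant on the hardened program and take identical steps, in particular producing identical
  observations: branch conditions and array indices only read public variables.
*)
theory Submission
  imports Defs
begin

(* Keep the numeral in ANum 1: unfolding it to Suc 0 would break matching against the
   hardened program shapes below. *)
declare One_nat_def [simp del]

lemma aeval_cong: "(\<forall>x\<in>avars e. \<rho>1 x = \<rho>2 x) \<Longrightarrow> aeval \<rho>1 e = aeval \<rho>2 e"
  and beval_cong: "(\<forall>x\<in>bvars b. \<rho>1 x = \<rho>2 x) \<Longrightarrow> beval \<rho>1 b = beval \<rho>2 b"
  by (induction e and b rule: avars_bvars.induct) (auto cong: map_cong)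

lemma aeval_public_eq: "label_of_aexp P e \<Longrightarrow> pub_equiv P \<rho>1 \<rho>2 \<Longrightarrow> aeval \<rho>1 e = aeval \<rho>2 e"
  by (rule aeval_cong) (auto simp: label_of_aexp_def pub_equiv_def)

lemma beval_public_eq: "label_of_bexp P b \<Longrightarrow> pub_equiv P \<rho>1 \<rho>2 \<Longrightarrow> beval \<rho>1 b = beval \<rho>2 b"
  by (rule beval_cong) (auto simp: label_of_bexp_def pub_equiv_def)

inductive_cases Skip_stepE: "spec_step Skip \<rho> \<mu> \<beta> ds os c' \<rho>' \<mu>' \<beta>'"
inductive_cases Asgn_stepE: "spec_step (Asgn x e) \<rho> \<mu> \<beta> ds os c' \<rho>' \<mu>' \<beta>'"
inductive_cases Seq_stepE: "spec_step (Seq c1 c2) \<rho> \<mu> \<beta> ds os c' \<rho>' \<mu>' \<beta>'"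
inductive_cases If_stepE: "spec_step (If b c1 c2) \<rho> \<mu> \<beta> ds os c' \<rho>' \<mu>' \<beta>'"
inductive_cases While_stepE: "spec_step (While b c) \<rho> \<mu> \<beta> ds os c' \<rho>' \<mu>' \<beta>'"
inductive_cases ARead_stepE: "spec_step (ARead x a i) \<rho> \<mu> \<beta> ds os c' \<rho>' \<mu>' \<beta>'"
inductive_cases AWrite_stepE: "spec_step (AWrite a i e) \<rho> \<mu> \<beta> ds os c' \<rho>' \<mu>' \<beta>'"

lemma spec_step_obs_length:
  "spec_step c \<rho> \<mu> \<beta> ds os c' \<rho>' \<mu>' \<beta>' \<Longrightarrow> length os = length ds"
  by (induction rule: spec_step.induct) auto

lemma spec_step_directions_length_eq:
  "spec_step c \<rho>1 \<mu>1 \<beta>1 ds1 os1 c1 \<rho>1' \<mu>1' \<beta>1' \<Longrightarrow>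
   spec_step c \<rho>2 \<mu>2 \<beta>2 ds2 os2 c2 \<rho>2' \<mu>2' \<beta>2' \<Longrightarrow> length ds1 = length ds2"
proof (induction arbitrary: \<rho>2 \<mu>2 \<beta>2 ds2 os2 c2 \<rho>2' \<mu>2' \<beta>2' rule: spec_step.induct)
  case (Spec_Seq c1 \<rho> \<mu> \<beta> ds os c1' \<rho>' \<mu>' \<beta>' c2)
  from Spec_Seq.prems show ?case
  proof (rule Seq_stepE)
    show "c1 = Skip \<Longrightarrow> ?thesis" using Spec_Seq.hyps by (auto elim: Skip_stepE)
  qed (rule Spec_Seq.IH)
next
  case Spec_Seq_Skip
  then show ?case by (auto elim!: Seq_stepE Skip_stepE)
qed (erule Skip_stepE Asgn_stepE Seq_stepE If_stepE While_stepE ARead_stepE AWrite_stepE; simp)+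

lemma spec_multi_obs_length:
  "spec_multi c \<rho> \<mu> \<beta> ds os c' \<rho>' \<mu>' \<beta>' \<Longrightarrow> length os = length ds"
  by (induction rule: spec_multi.induct) (auto dest: spec_step_obs_length)

abbreviation flag_then :: "bexp \<Rightarrow> com" where
  "flag_then be \<equiv> Asgn bflag (ACond be (AVar bflag) (ANum 1))"
abbreviation flag_else :: "bexp \<Rightarrow> com" where
  "flag_else be \<equiv> Asgn bflag (ACond be (ANum 1) (AVar bflag))"
abbreviation masked :: "vname \<Rightarrow> aexp" where
  "masked x \<equiv> ACond (BCmp (=) (AVar bflag) (ANum 1)) (ANum 0) (AVar x)"

(* The programs reachable by speculative execution from the output of svslh; the last three
   rules are the successive stages of a hardened loop. *)
inductive hardened :: "pub_vars \<Rightarrow> pub_arrs \<Rightarrow> com \<Rightarrow> bool" for P PA where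
  hardened_Skip: "hardened P PA Skip"
| hardened_Asgn: "x \<noteq> bflag \<Longrightarrow> bflag \<notin> avars e \<Longrightarrow> label_of_aexp P e \<sqsubseteq> P x \<Longrightarrow>
     hardened P PA (Asgn x e)"
| hardened_flag_then: "label_of_bexp P be \<Longrightarrow> hardened P PA (flag_then be)"
| hardened_flag_else: "label_of_bexp P be \<Longrightarrow> hardened P PA (flag_else be)"
| hardened_mask: "P x \<Longrightarrow> x \<noteq> bflag \<Longrightarrow> hardened P PA (Asgn x (masked x))"
| hardened_ARead_secret: "\<not> P x \<Longrightarrow> x \<noteq> bflag \<Longrightarrow> label_of_aexp P i \<Longrightarrow>
     hardened P PA (ARead x a i)"
| hardened_ARead_public: "P x \<Longrightarrow> PA a \<Longrightarrow> x \<noteq> bflag \<Longrightarrow> label_of_aexp P i \<Longrightarrow>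
     hardened P PA (Seq (ARead x a i) (Asgn x (masked x)))"
| hardened_AWrite: "label_of_aexp P i \<Longrightarrow> label_of_aexp P e \<sqsubseteq> PA a \<Longrightarrow>
     hardened P PA (AWrite a i e)"
| hardened_Seq: "hardened P PA c1 \<Longrightarrow> hardened P PA c2 \<Longrightarrow> hardened P PA (Seq c1 c2)"
| hardened_If: "label_of_bexp P be \<Longrightarrow> hardened P PA c1 \<Longrightarrow> hardened P PA c2 \<Longrightarrow>
     hardened P PA (If be (Seq (flag_then be) c1) (Seq (flag_else be) c2))"
| hardened_While: "label_of_bexp P be \<Longrightarrow> hardened P PA c \<Longrightarrow>
     hardened P PA (Seq (While be (Seq (flag_then be) c)) (flag_else be))"
| hardened_While_unfolded: "label_of_bexp P be \<Longrightarrow> hardened P PA c \<Longrightarrow>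
     hardened P PA (Seq (If be (Seq (Seq (flag_then be) c) (While be (Seq (flag_then be) c))) Skip)
                         (flag_else be))"
| hardened_While_running: "label_of_bexp P be \<Longrightarrow> hardened P PA c \<Longrightarrow> hardened P PA c' \<Longrightarrow>
     hardened P PA (Seq (Seq c' (While be (Seq (flag_then be) c))) (flag_else be))"

lemma hardened_svslh: "cct_typed P PA c \<Longrightarrow> bflag \<notin> used_vars c \<Longrightarrow> hardened P PA (svslh P c)"
  by (induction rule: cct_typed.induct) (auto simp: lab_le_def intro: hardened.intros)

lemma hardened_step:
  "hardened P PA c \<Longrightarrow> spec_step c \<rho> \<mu> \<beta> ds os c' \<rho>' \<mu>' \<beta>' \<Longrightarrow> hardened P PA c'"
proof (induction arbitrary: \<rho> \<mu> \<beta> ds os c' \<rho>' \<mu>' \<beta>' rule: hardened.induct)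
  case (hardened_ARead_public x a i)
  then show ?case by (auto elim!: Seq_stepE ARead_stepE intro: hardened.intros)
next
  case (hardened_Seq c1 c2)
  then show ?case by (auto elim!: Seq_stepE intro: hardened.intros)
next
  case (hardened_If be c1 c2)
  then show ?case by (auto elim!: If_stepE intro!: hardened_Seq hardened_flag_then hardened_flag_else)
next
  case (hardened_While be c)
  then show ?case by (auto elim!: Seq_stepE While_stepE intro!: hardened_While_unfolded)
next
  case (hardened_While_unfolded be c)
  then have "hardened P PA (Seq (Seq (Seq (flag_then be) c) (While be (Seq (flag_then be) c)))
                               (flag_else be))"
        and "hardened P PA (Seq Skip (flag_else be))"
    by (blast intro: hardened.intros)+
  with hardened_While_unfolded.prems show ?case by (auto elim!: Seq_stepE If_stepE)
next
  case (hardened_While_running be c c'')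
  then show ?case
    by (cases "c'' = Skip")
      (auto elim!: Seq_stepE Skip_stepE intro: hardened.intros)
qed (auto elim!: Skip_stepE Asgn_stepE ARead_stepE AWrite_stepE intro: hardened.intros)

fun next_mask :: "com \<Rightarrow> vname option" where
  "next_mask (Seq c1 c2) = (if c1 = Skip then next_mask c2 else next_mask c1)"
| "next_mask (Asgn x e) = (if e = masked x then Some x else None)"
| "next_mask _ = None"

fun next_sets_flag :: "sstate \<Rightarrow> com \<Rightarrow> bool" where
  "next_sets_flag \<rho> (Seq c1 c2) =
     (if c1 = Skip then next_sets_flag \<rho> c2 else next_sets_flag \<rho> c1)"
| "next_sets_flag \<rho> (Asgn x e) = (x = bflag \<and> aeval \<rho> e = 1)"
| "next_sets_flag \<rho> _ = False"

(* A public variable may differ only right before its mask, which then resets it to 0 in both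
   runs since b = 1. *)
definition spec_low_equiv ::
  "pub_vars \<Rightarrow> pub_arrs \<Rightarrow> com \<Rightarrow> sstate \<Rightarrow> astate \<Rightarrow> sstate \<Rightarrow> astate \<Rightarrow> bool \<Rightarrow> bool" where
  "spec_low_equiv P PA c \<rho>1 \<mu>1 \<rho>2 \<mu>2 \<beta> \<longleftrightarrow>
     \<rho>1 bflag = \<rho>2 bflag \<and>
     (\<forall>y. P y \<longrightarrow> \<rho>1 y = \<rho>2 y \<or> (next_mask c = Some y \<and> \<rho>1 bflag = 1)) \<and>
     (\<forall>a. PA a \<longrightarrow> length (\<mu>1 a) = length (\<mu>2 a)) \<and>
     (\<not> \<beta> \<longrightarrow> (\<forall>a. PA a \<longrightarrow> \<mu>1 a = \<mu>2 a)) \<and>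
     (\<beta> \<longrightarrow> \<rho>1 bflag = 1 \<or> next_sets_flag \<rho>1 c)"

lemma spec_low_equiv_pub_equiv:
  "spec_low_equiv P PA c \<rho>1 \<mu>1 \<rho>2 \<mu>2 \<beta> \<Longrightarrow> next_mask c = None \<Longrightarrow> pub_equiv P \<rho>1 \<rho>2"
  by (auto simp: spec_low_equiv_def pub_equiv_def)

lemma spec_low_equiv_Seq_Skip:
  "spec_low_equiv P PA (Seq Skip c) \<rho>1 \<mu>1 \<rho>2 \<mu>2 \<beta> \<longleftrightarrow> spec_low_equiv P PA c \<rho>1 \<mu>1 \<rho>2 \<mu>2 \<beta>"
  by (simp add: spec_low_equiv_def)

lemma spec_low_equiv_SeqD:
  "spec_low_equiv P PA (Seq c1 c2) \<rho>1 \<mu>1 \<rho>2 \<mu>2 \<beta> \<Longrightarrow> c1 \<noteq> Skip \<Longrightarrow>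
   spec_low_equiv P PA c1 \<rho>1 \<mu>1 \<rho>2 \<mu>2 \<beta>"
  by (auto simp: spec_low_equiv_def)

lemma spec_low_equiv_SeqI:
  "spec_low_equiv P PA c1 \<rho>1 \<mu>1 \<rho>2 \<mu>2 \<beta> \<Longrightarrow> spec_low_equiv P PA (Seq c1 c2) \<rho>1 \<mu>1 \<rho>2 \<mu>2 \<beta>"
  by (cases "c1 = Skip") (auto simp: spec_low_equiv_def)

definition lockstep :: "pub_vars \<Rightarrow> pub_arrs \<Rightarrow> com \<Rightarrow> bool" where
  "lockstep P PA c \<longleftrightarrow>
     (\<forall>\<rho>1 \<mu>1 \<rho>2 \<mu>2 \<beta> ds os1 c1 \<rho>1' \<mu>1' \<beta>1 os2 c2 \<rho>2' \<mu>2' \<beta>2.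
        spec_step c \<rho>1 \<mu>1 \<beta> ds os1 c1 \<rho>1' \<mu>1' \<beta>1 \<longrightarrow>
        spec_step c \<rho>2 \<mu>2 \<beta> ds os2 c2 \<rho>2' \<mu>2' \<beta>2 \<longrightarrow>
        spec_low_equiv P PA c \<rho>1 \<mu>1 \<rho>2 \<mu>2 \<beta> \<longrightarrow>
        os1 = os2 \<and> c1 = c2 \<and> \<beta>1 = \<beta>2 \<and> spec_low_equiv P PA c1 \<rho>1' \<mu>1' \<rho>2' \<mu>2' \<beta>1)"

lemma lockstepI:
  assumes "\<And>\<rho>1 \<mu>1 \<rho>2 \<mu>2 \<beta> ds os1 c1 \<rho>1' \<mu>1' \<beta>1 os2 c2 \<rho>2' \<mu>2' \<beta>2.
    spec_low_equiv P PA c \<rho>1 \<mu>1 \<rho>2 \<mu>2 \<beta> \<Longrightarrow>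
    spec_step c \<rho>1 \<mu>1 \<beta> ds os1 c1 \<rho>1' \<mu>1' \<beta>1 \<Longrightarrow> spec_step c \<rho>2 \<mu>2 \<beta> ds os2 c2 \<rho>2' \<mu>2' \<beta>2 \<Longrightarrow>
    os1 = os2 \<and> c1 = c2 \<and> \<beta>1 = \<beta>2 \<and> spec_low_equiv P PA c1 \<rho>1' \<mu>1' \<rho>2' \<mu>2' \<beta>1"
  shows "lockstep P PA c"
  using assms by (auto simp: lockstep_def)

lemma lockstep_Seq:
  assumes "lockstep P PA c1"
  shows "lockstep P PA (Seq c1 c2)"
proof (cases "c1 = Skip")
  case True
  then show ?thesis by (auto simp: lockstep_def spec_low_equiv_Seq_Skip elim!: Seq_stepE Skip_stepE)
next
  case False
  with assms show ?thesis
    unfolding lockstep_def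
    by (blast elim!: Seq_stepE dest: spec_low_equiv_SeqD intro: spec_low_equiv_SeqI)
qed

lemma lockstep_While: "lockstep P PA (While be c)"
  by (auto simp: lockstep_def spec_low_equiv_def elim!: While_stepE)

lemma lockstep_Asgn:
  assumes "hardened P PA (Asgn x e)"
  shows "lockstep P PA (Asgn x e)"
proof -
  have "spec_low_equiv P PA Skip (\<rho>1(x := aeval \<rho>1 e)) \<mu>1 (\<rho>2(x := aeval \<rho>2 e)) \<mu>2 \<beta>"
    if equiv: "spec_low_equiv P PA (Asgn x e) \<rho>1 \<mu>1 \<rho>2 \<mu>2 \<beta>" for \<rho>1 \<mu>1 \<rho>2 \<mu>2 \<beta>
    using assms
  proof cases
    case hardened_Asgn
    then have "next_mask (Asgn x e) = None" by auto
    with equiv have pub: "pub_equiv P \<rho>1 \<rho>2" by (rule spec_low_equiv_pub_equiv)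
    then have "P x \<Longrightarrow> aeval \<rho>1 e = aeval \<rho>2 e"
      using hardened_Asgn(3) by (auto simp: lab_le_def intro: aeval_public_eq)
    with pub equiv hardened_Asgn show ?thesis by (auto simp: spec_low_equiv_def pub_equiv_def)
  next
    case (hardened_flag_then be)
    have "pub_equiv P \<rho>1 \<rho>2"
      using equiv by (rule spec_low_equiv_pub_equiv) (simp add: hardened_flag_then)
    with hardened_flag_then have "beval \<rho>1 be = beval \<rho>2 be" by (simp add: beval_public_eq)
    with equiv hardened_flag_then show ?thesis by (auto simp: spec_low_equiv_def)
  next
    case (hardened_flag_else be)
    have "pub_equiv P \<rho>1 \<rho>2"
      using equiv by (rule spec_low_equiv_pub_equiv) (simp add: hardened_flag_else)
    with hardened_flag_else have "beval \<rho>1 be = beval \<rho>2 be" by (simp add: beval_public_eq)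
    with equiv hardened_flag_else show ?thesis by (auto simp: spec_low_equiv_def)
  next
    case hardened_mask
    with equiv show ?thesis by (auto simp: spec_low_equiv_def)
  qed
  then show ?thesis by (auto simp: lockstep_def elim!: Asgn_stepE)
qed

lemma lockstep_ARead_secret:
  assumes "\<not> P x" "x \<noteq> bflag" "label_of_aexp P i"
  shows "lockstep P PA (ARead x a i)" (is "lockstep P PA ?c")
proof (rule lockstepI)
  fix \<rho>1 \<mu>1 \<rho>2 \<mu>2 \<beta> ds os1 d1 \<rho>1' \<mu>1' \<beta>1 os2 d2 \<rho>2' \<mu>2' \<beta>2
  assume equiv: "spec_low_equiv P PA ?c \<rho>1 \<mu>1 \<rho>2 \<mu>2 \<beta>"
    and "spec_step ?c \<rho>1 \<mu>1 \<beta> ds os1 d1 \<rho>1' \<mu>1' \<beta>1" "spec_step ?c \<rho>2 \<mu>2 \<beta> ds os2 d2 \<rho>2' \<mu>2' \<beta>2"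
  moreover have "aeval \<rho>1 i = aeval \<rho>2 i"
    using assms(3) spec_low_equiv_pub_equiv[OF equiv] by (simp add: aeval_public_eq)
  ultimately show "os1 = os2 \<and> d1 = d2 \<and> \<beta>1 = \<beta>2 \<and> spec_low_equiv P PA d1 \<rho>1' \<mu>1' \<rho>2' \<mu>2' \<beta>1"
    using assms(1,2) by (auto simp: spec_low_equiv_def elim!: ARead_stepE split: if_splits)
qed

lemma lockstep_ARead_masked:
  assumes "PA a" "x \<noteq> bflag" "label_of_aexp P i"
  shows "lockstep P PA (Seq (ARead x a i) (Asgn x (masked x)))" (is "lockstep P PA ?c")
proof (rule lockstepI)
  fix \<rho>1 \<mu>1 \<rho>2 \<mu>2 \<beta> ds os1 d1 \<rho>1' \<mu>1' \<beta>1 os2 d2 \<rho>2' \<mu>2' \<beta>2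
  assume equiv: "spec_low_equiv P PA ?c \<rho>1 \<mu>1 \<rho>2 \<mu>2 \<beta>"
    and "spec_step ?c \<rho>1 \<mu>1 \<beta> ds os1 d1 \<rho>1' \<mu>1' \<beta>1" "spec_step ?c \<rho>2 \<mu>2 \<beta> ds os2 d2 \<rho>2' \<mu>2' \<beta>2"
  moreover have "aeval \<rho>1 i = aeval \<rho>2 i"
    using assms(3) spec_low_equiv_pub_equiv[OF equiv] by (simp add: aeval_public_eq)
  moreover have "\<beta> \<Longrightarrow> \<rho>1 bflag = 1" and "\<not> \<beta> \<Longrightarrow> \<mu>1 a = \<mu>2 a"
    using equiv assms(1) by (simp_all add: spec_low_equiv_def)
  ultimately show "os1 = os2 \<and> d1 = d2 \<and> \<beta>1 = \<beta>2 \<and> spec_low_equiv P PA d1 \<rho>1' \<mu>1' \<rho>2' \<mu>2' \<beta>1"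
    using assms(2)
    by (auto simp: spec_low_equiv_def elim!: Seq_stepE ARead_stepE Skip_stepE split: if_splits)
qed

lemma lockstep_AWrite:
  assumes "label_of_aexp P i" "label_of_aexp P e \<sqsubseteq> PA a"
  shows "lockstep P PA (AWrite a i e)" (is "lockstep P PA ?c")
proof (rule lockstepI)
  fix \<rho>1 \<mu>1 \<rho>2 \<mu>2 \<beta> ds os1 d1 \<rho>1' \<mu>1' \<beta>1 os2 d2 \<rho>2' \<mu>2' \<beta>2
  assume equiv: "spec_low_equiv P PA ?c \<rho>1 \<mu>1 \<rho>2 \<mu>2 \<beta>"
    and "spec_step ?c \<rho>1 \<mu>1 \<beta> ds os1 d1 \<rho>1' \<mu>1' \<beta>1" "spec_step ?c \<rho>2 \<mu>2 \<beta> ds os2 d2 \<rho>2' \<mu>2' \<beta>2"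
  moreover have "pub_equiv P \<rho>1 \<rho>2" using equiv by (rule spec_low_equiv_pub_equiv) simp
  then have "aeval \<rho>1 i = aeval \<rho>2 i" and "PA a \<Longrightarrow> aeval \<rho>1 e = aeval \<rho>2 e"
    using assms by (auto simp: lab_le_def intro: aeval_public_eq)
  ultimately show "os1 = os2 \<and> d1 = d2 \<and> \<beta>1 = \<beta>2 \<and> spec_low_equiv P PA d1 \<rho>1' \<mu>1' \<rho>2' \<mu>2' \<beta>1"
    by (auto simp: spec_low_equiv_def elim!: AWrite_stepE)
qed

lemma lockstep_If_flagged:
  assumes "label_of_bexp P be"
  shows "lockstep P PA (If be (Seq (flag_then be) c1) (Seq (flag_else be) c2))"
    (is "lockstep P PA ?c")
proof (rule lockstepI)
  fix \<rho>1 \<mu>1 \<rho>2 \<mu>2 \<beta> ds os1 d1 \<rho>1' \<mu>1' \<beta>1 os2 d2 \<rho>2' \<mu>2' \<beta>2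
  assume equiv: "spec_low_equiv P PA ?c \<rho>1 \<mu>1 \<rho>2 \<mu>2 \<beta>"
    and "spec_step ?c \<rho>1 \<mu>1 \<beta> ds os1 d1 \<rho>1' \<mu>1' \<beta>1" "spec_step ?c \<rho>2 \<mu>2 \<beta> ds os2 d2 \<rho>2' \<mu>2' \<beta>2"
  moreover have "beval \<rho>1 be = beval \<rho>2 be"
    using assms spec_low_equiv_pub_equiv[OF equiv] by (simp add: beval_public_eq)
  ultimately show "os1 = os2 \<and> d1 = d2 \<and> \<beta>1 = \<beta>2 \<and> spec_low_equiv P PA d1 \<rho>1' \<mu>1' \<rho>2' \<mu>2' \<beta>1"
    by (auto simp: spec_low_equiv_def elim!: If_stepE)
qed

lemma lockstep_While_unfolded:
  assumes "label_of_bexp P be"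
  shows "lockstep P PA (Seq (If be (Seq (Seq (flag_then be) c) c') Skip) (flag_else be))"
    (is "lockstep P PA ?c")
proof (rule lockstepI)
  fix \<rho>1 \<mu>1 \<rho>2 \<mu>2 \<beta> ds os1 d1 \<rho>1' \<mu>1' \<beta>1 os2 d2 \<rho>2' \<mu>2' \<beta>2
  assume equiv: "spec_low_equiv P PA ?c \<rho>1 \<mu>1 \<rho>2 \<mu>2 \<beta>"
    and "spec_step ?c \<rho>1 \<mu>1 \<beta> ds os1 d1 \<rho>1' \<mu>1' \<beta>1" "spec_step ?c \<rho>2 \<mu>2 \<beta> ds os2 d2 \<rho>2' \<mu>2' \<beta>2"
  moreover have "beval \<rho>1 be = beval \<rho>2 be"
    using assms spec_low_equiv_pub_equiv[OF equiv] by (simp add: beval_public_eq)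
  ultimately show "os1 = os2 \<and> d1 = d2 \<and> \<beta>1 = \<beta>2 \<and> spec_low_equiv P PA d1 \<rho>1' \<mu>1' \<rho>2' \<mu>2' \<beta>1"
    by (auto simp: spec_low_equiv_def elim!: Seq_stepE If_stepE)
qed

lemma hardened_lockstep: "hardened P PA c \<Longrightarrow> lockstep P PA c"
proof (induction rule: hardened.induct)
  case hardened_Skip
  show ?case by (auto simp: lockstep_def elim: Skip_stepE)
next
  case (hardened_While_unfolded be c)
  then show ?case using lockstep_While_unfolded by blast
qed (auto intro: lockstep_Seq lockstep_While lockstep_Asgn lockstep_ARead_secret
    lockstep_ARead_masked lockstep_AWrite lockstep_If_flagged hardened.intros)

lemma spec_multi_obs_eq:
  "spec_multi c \<rho>1 \<mu>1 \<beta> ds os1 c1 \<rho>1' \<mu>1' \<beta>1 \<Longrightarrow> spec_multi c \<rho>2 \<mu>2 \<beta> ds os2 c2 \<rho>2' \<mu>2' \<beta>2 \<Longrightarrow>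
   hardened P PA c \<Longrightarrow> spec_low_equiv P PA c \<rho>1 \<mu>1 \<rho>2 \<mu>2 \<beta> \<Longrightarrow> os1 = os2"
proof (induction arbitrary: \<rho>2 \<mu>2 os2 c2 \<rho>2' \<mu>2' \<beta>2 rule: spec_multi.induct)
  case Multi_Refl
  then show ?case using spec_multi_obs_length by fastforce
next
  case (Multi_Step c \<rho>1 \<mu>1 \<beta> ds1 os1 c' \<rho>1' \<mu>1' \<beta>' ds os c'' \<rho>1'' \<mu>1'' \<beta>'')
  note step1 = Multi_Step.hyps(1) and rest1 = Multi_Step.hyps(2) and IH = Multi_Step.IH
    and hardened = Multi_Step.prems(2) and equiv = Multi_Step.prems(3)
  from Multi_Step.prems(1) show ?case
  proof cases
    case Multi_Refl
    then show ?thesis using spec_step_obs_length[OF step1] spec_multi_obs_length[OF rest1] by simp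
  next
    case (Multi_Step ds1' os1' c2' \<rho>2'' \<mu>2'' \<beta>2'' ds2' os2')
    have "length ds1 = length ds1'"
      using step1 Multi_Step(3) by (rule spec_step_directions_length_eq)
    with Multi_Step(1) have "ds1' = ds1" and "ds2' = ds" by auto
    with Multi_Step(3,4) have step2: "spec_step c \<rho>2 \<mu>2 \<beta> ds1 os1' c2' \<rho>2'' \<mu>2'' \<beta>2''"
      and rest2: "spec_multi c2' \<rho>2'' \<mu>2'' \<beta>2'' ds os2' c2 \<rho>2' \<mu>2' \<beta>2" by simp_all
    from hardened_lockstep[OF hardened] step1 step2 equiv
    have "os1 = os1'" and "c2' = c'" and "\<beta>2'' = \<beta>'"
      and "spec_low_equiv P PA c' \<rho>1' \<mu>1' \<rho>2'' \<mu>2'' \<beta>'"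
      unfolding lockstep_def by blast+
    moreover have "hardened P PA c'" using hardened step1 by (rule hardened_step)
    ultimately have "os = os2'" using IH rest2 by blast
    with \<open>os1 = os1'\<close> show ?thesis using Multi_Step(2) by simp
  qed
qed

theorem theorem6p2:
  fixes P :: pub_vars and PA :: pub_arrs and c :: com
    and \<rho>1 \<rho>2 :: sstate and \<mu>1 \<mu>2 :: astate
  assumes "bflag \<notin> used_vars c"
    and "\<rho>1 bflag = 0" and "\<rho>2 bflag = 0"
    and "\<forall>a. 0 < length (\<mu>1 a)" and "\<forall>a. 0 < length (\<mu>2 a)"
    and "cct_typed P PA c"
    and "pub_equiv P \<rho>1 \<rho>2"
    and "pub_equiv_arr PA \<mu>1 \<mu>2"
  shows "spec_equiv (svslh P c) \<rho>1 \<mu>1 False (svslh P c) \<rho>2 \<mu>2 False"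
proof -
  have hardened: "hardened P PA (svslh P c)" using assms(6,1) by (rule hardened_svslh)
  have "\<forall>a. PA a \<longrightarrow> \<mu>1 a = \<mu>2 a"
    using assms(8) unfolding pub_equiv_arr_def by (auto intro: nth_equalityI)
  with assms(2,3,7) have "spec_low_equiv P PA (svslh P c) \<rho>1 \<mu>1 \<rho>2 \<mu>2 False"
    unfolding spec_low_equiv_def pub_equiv_def by auto
  with hardened show ?thesis unfolding spec_equiv_def using spec_multi_obs_eq by blast
qed

end
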